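(* For every number of items $m\ge 3$, the class GS of valuations with the gross substitutes property on a set $X$ of $m$ items, viewed as a subset of $\mathbb{R}^{2^m-1}$ (via the coordinates $v(S)$, $\emptyset\ne S\subseteq X$), has Lebesgue measure zero; in particular its interior is empty.
   Context: A valuation on a finite set $X$ is a function $v:2^X\to\mathbb{R}_{\ge 0}$ with $v(\emptyset)=0$ and $v(A)\le v(B)$ whenever $A\subseteq B$. For a price vector $\vec p=(p_x)_{x\in X}$ of reals, $v(S\mid\vec p)=v(S)-\sum_{x\in S}p_x$, and the demand set $D(v\mid\vec p)$ is the family of sets $S\subseteq X$ maximizing $v(S\mid\vec p)$. A valuation $v$ has the gross substitutes property if for every item $i$, every price vector $\vec p$ and every price vector $\vec q\ge\vec p$ (coordinatewise) with $q_i=p_i$, whenever $i\in A$ for some $A\in D(v\mid\vec p)$ there exists $A'\in D(v\mid\vec q)$ with $i\in A'$. *)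

theory Defs
  imports "HOL-Analysis.Analysis"
begin

definition valuation :: "'a set \<Rightarrow> ('a set \<Rightarrow> real) \<Rightarrow> bool" where
  "valuation X v \<longleftrightarrow> v {} = 0 \<and> (\<forall>S. S \<subseteq> X \<longrightarrow> 0 \<le> v S) \<and>
     (\<forall>A B. A \<subseteq> B \<and> B \<subseteq> X \<longrightarrow> v A \<le> v B)"

definition demand :: "'a set \<Rightarrow> ('a set \<Rightarrow> real) \<Rightarrow> ('a \<Rightarrow> real) \<Rightarrow> 'a set set" where
  "demand X v p = {S. S \<subseteq> X \<and> (\<forall>T. T \<subseteq> X \<longrightarrow> v T - sum p T \<le> v S - sum p S)}"

definition gross_substitutes :: "'a set \<Rightarrow> ('a set \<Rightarrow> real) \<Rightarrow> bool" where
  "gross_substitutes X v \<longleftrightarrow>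
     (\<forall>i\<in>X. \<forall>p q. (\<forall>x\<in>X. p x \<le> q x) \<and> q i = p i \<and> (\<exists>A\<in>demand X v p. i \<in> A)
        \<longrightarrow> (\<exists>A'\<in>demand X v q. i \<in> A'))"

definition nonempty_subsets :: "'a set \<Rightarrow> 'a set set" where
  "nonempty_subsets X = {S. S \<noteq> {} \<and> S \<subseteq> X}"

definition val_of :: "('a set \<Rightarrow> real) \<Rightarrow> 'a set \<Rightarrow> real" where
  "val_of f S = (if S = {} then 0 else f S)"

definition GS_set :: "'a set \<Rightarrow> ('a set \<Rightarrow> real) set" where
  "GS_set X = {f \<in> PiE (nonempty_subsets X) (\<lambda>_. UNIV).
      valuation X (val_of f) \<and> gross_substitutes X (val_of f)}"

end

theory Submission
  imports Defs
begin

(* For three items i, j, k the gross substitutes property forces the maximum of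
   v{i,j} + v{k}, v{i,k} + v{j} and v{j,k} + v{i} to be attained at least twice: if one sum were
   strictly largest, suitable prices would make a bundle containing some item optimal, while raising
   the price of another item would push every bundle containing the first one out of demand.
   Pricing all remaining items out of the market reduces this to valuations on three items.
   Hence GS lies in a union of three hyperplanes of the coordinate space, a Lebesgue null set, and
   a null set contains no box. GS is measurable because the gross substitutes condition only has to
   be tested at rational prices: a violating pair of real price vectors survives a small
   perturbation followed by rounding to a rational grid. *)

section \<open>Pricing items out of the market\<close>

lemma valuation_subset: "valuation X v \<Longrightarrow> P \<subseteq> X \<Longrightarrow> valuation P v"
  unfolding valuation_def by (meson subset_trans)

lemma utility_negative_if_priced_out:
  assumes "finite X" and val: "valuation X v" and "P \<subseteq> X"
    and on_P: "\<forall>x\<in>P. p' x = p x" and off_P: "\<forall>x\<in>X - P. p' x = M"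
    and M: "v X + (\<Sum>x\<in>P. \<bar>p x\<bar>) < M"
    and T: "T \<subseteq> X" "\<not> T \<subseteq> P"
  shows "v T - sum p' T < 0"
proof -
  have fin_T: "finite T" using \<open>finite X\<close> T finite_subset by blast
  have "0 \<le> v X" "v T \<le> v X" using val T unfolding valuation_def by blast+
  have "sum p' (T \<inter> P) = sum p (T \<inter> P)"
    using on_P by (intro sum.cong) auto
  then have "- sum p' (T \<inter> P) = (\<Sum>x\<in>T \<inter> P. - p x)"
    by (simp add: sum_negf)
  also have "\<dots> \<le> (\<Sum>x\<in>T \<inter> P. \<bar>p x\<bar>)"
    by (intro sum_mono) auto
  also have "\<dots> \<le> (\<Sum>x\<in>P. \<bar>p x\<bar>)"
    using \<open>finite X\<close> \<open>P \<subseteq> X\<close> finite_subset by (intro sum_mono2) auto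
  finally have inside: "- (\<Sum>x\<in>P. \<bar>p x\<bar>) \<le> sum p' (T \<inter> P)" by linarith
  have "0 \<le> (\<Sum>x\<in>P. \<bar>p x\<bar>)" by (simp add: sum_nonneg)
  then have "0 \<le> M" using M \<open>0 \<le> v X\<close> by linarith
  have "sum p' (T - P) = sum (\<lambda>_. M) (T - P)"
    using off_P T by (intro sum.cong) auto
  then have "sum p' (T - P) = real (card (T - P)) * M" by simp
  moreover have "card (T - P) \<ge> 1"
    using T fin_T by (simp add: Suc_le_eq card_gt_0_iff)
  ultimately have "M \<le> sum p' (T - P)"
    using mult_right_mono[of 1 "real (card (T - P))" M] \<open>0 \<le> M\<close> by simp
  moreover have "sum p' T = sum p' (T \<inter> P) + sum p' (T - P)"
    by (metis fin_T sum.Int_Diff)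
  ultimately show ?thesis using inside \<open>v T \<le> v X\<close> M by linarith
qed

lemma demand_extend_prices:
  assumes "finite X" and val: "valuation X v" and "P \<subseteq> X"
    and on_P: "\<forall>x\<in>P. p' x = p x" and off_P: "\<forall>x\<in>X - P. p' x = M"
    and M: "v X + (\<Sum>x\<in>P. \<bar>p x\<bar>) < M"
  shows "demand X v p' = demand P v p"
proof -
  have sum_P: "sum p' S = sum p S" if "S \<subseteq> P" for S
    using on_P that by (intro sum.cong) auto
  note outside = utility_negative_if_priced_out[OF assms]
  have "v {} = 0" using val unfolding valuation_def by blast
  then have empty_0: "v {} - sum p {} = 0" by simp
  have "S \<in> demand X v p' \<longleftrightarrow> S \<in> demand P v p" for S
  proof
    assume "S \<in> demand X v p'"
    then have S: "S \<subseteq> X" and max: "\<And>T. T \<subseteq> X \<Longrightarrow> v T - sum p' T \<le> v S - sum p' S"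
      unfolding demand_def by auto
    have "S \<subseteq> P"
      using max[of "{}"] outside[OF S] empty_0 by force
    moreover have "v T - sum p T \<le> v S - sum p S" if "T \<subseteq> P" for T
      using max[of T] sum_P[OF that] sum_P[OF \<open>S \<subseteq> P\<close>] that \<open>P \<subseteq> X\<close> by auto
    ultimately show "S \<in> demand P v p" unfolding demand_def by auto
  next
    assume "S \<in> demand P v p"
    then have S: "S \<subseteq> P" and max: "\<And>T. T \<subseteq> P \<Longrightarrow> v T - sum p T \<le> v S - sum p S"
      unfolding demand_def by auto
    have "v T - sum p' T \<le> v S - sum p' S" if T: "T \<subseteq> X" for T
    proof (cases "T \<subseteq> P")
      case True
      then show ?thesis using max sum_P S by auto
    next
      case False
      then show ?thesis using outside[OF T] max[of "{}"] empty_0 sum_P[OF S] by auto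
    qed
    then show "S \<in> demand X v p'" using S \<open>P \<subseteq> X\<close> unfolding demand_def by auto
  qed
  then show ?thesis by blast
qed

lemma gross_substitutes_subset:
  assumes "finite X" and val: "valuation X v" and gs: "gross_substitutes X v" and "P \<subseteq> X"
  shows "gross_substitutes P v"
  unfolding gross_substitutes_def
proof (intro ballI allI impI; elim conjE bexE)
  fix i p q A
  assume "i \<in> P" and le: "\<forall>x\<in>P. p x \<le> q x" and "q i = p i" and "A \<in> demand P v p" "i \<in> A"
  define M where "M = v X + (\<Sum>x\<in>P. \<bar>p x\<bar>) + (\<Sum>x\<in>P. \<bar>q x\<bar>) + 1"
  define p' where "p' x = (if x \<in> P then p x else M)" for x
  define q' where "q' x = (if x \<in> P then q x else M)" for x
  have M_p: "v X + (\<Sum>x\<in>P. \<bar>p x\<bar>) < M" and M_q: "v X + (\<Sum>x\<in>P. \<bar>q x\<bar>) < M"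
    unfolding M_def by (simp_all add: add_nonneg_pos sum_nonneg)
  have demand_p': "demand X v p' = demand P v p"
    by (rule demand_extend_prices[OF \<open>finite X\<close> val \<open>P \<subseteq> X\<close> _ _ M_p]) (simp_all add: p'_def)
  have demand_q': "demand X v q' = demand P v q"
    by (rule demand_extend_prices[OF \<open>finite X\<close> val \<open>P \<subseteq> X\<close> _ _ M_q]) (simp_all add: q'_def)
  have "\<forall>x\<in>X. p' x \<le> q' x" and "q' i = p' i"
    using le \<open>q i = p i\<close> \<open>i \<in> P\<close> by (auto simp: p'_def q'_def)
  then show "\<exists>A'\<in>demand P v q. i \<in> A'"
    using gs \<open>i \<in> P\<close> \<open>P \<subseteq> X\<close> \<open>A \<in> demand P v p\<close> \<open>i \<in> A\<close>
    unfolding gross_substitutes_def demand_p'[symmetric] demand_q'[symmetric] by blast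
qed

section \<open>Gross substitutes on two and three items\<close>

lemma all_subsets_insert:
  "(\<forall>T. T \<subseteq> insert a A \<longrightarrow> P T) \<longleftrightarrow> (\<forall>T. T \<subseteq> A \<longrightarrow> P T \<and> P (insert a T))"
proof (intro iffI allI impI)
  fix T assume all: "\<forall>T. T \<subseteq> A \<longrightarrow> P T \<and> P (insert a T)" and "T \<subseteq> insert a A"
  then have "T - {a} \<subseteq> A" by blast
  moreover have "T = T - {a} \<or> T = insert a (T - {a})" by blast
  ultimately show "P T" using all by metis
qed (simp_all add: subset_insertI2)

lemma ex_subsets_insert:
  "(\<exists>T. T \<subseteq> insert a A \<and> P T) \<longleftrightarrow> (\<exists>T. T \<subseteq> A \<and> (P T \<or> P (insert a T)))"
  using all_subsets_insert[of a A "Not \<circ> P"] by auto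

lemma gross_substitutesD:
  assumes "gross_substitutes X v" "j \<in> X" "A \<in> demand X v p" "j \<in> A"
    and "\<forall>x\<in>X. p x \<le> q x" "q j = p j" "B \<subseteq> X"
  shows "\<exists>S. S \<subseteq> X \<and> j \<in> S \<and> v B - sum q B \<le> v S - sum q S"
proof -
  obtain S where "S \<in> demand X v q" "j \<in> S"
    using assms(1-6) unfolding gross_substitutes_def by blast
  then show ?thesis
    using \<open>B \<subseteq> X\<close> unfolding demand_def by blast
qed

lemma gross_substitutes_pair_subadditive:
  assumes val: "valuation {i, j} v" and gs: "gross_substitutes {i, j} v" and "i \<noteq> j"
  shows "v {i, j} \<le> v {i} + v {j}"
proof (rule ccontr)
  assume superadditive: "\<not> ?thesis"
  (* {i, j} is optimal at p; after raising the price of i the empty bundle beats every bundle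
     containing j. *)
  define p where "p x = (if x = i then v {i} else v {i, j} - v {i})" for x
  define q where "q = p(i := v {i} + 1)"
  have "v {} = 0" and "v {j} \<le> v {i, j}"
    using val unfolding valuation_def by auto
  then have "{i, j} \<in> demand {i, j} v p"
    using superadditive \<open>i \<noteq> j\<close> unfolding demand_def all_subsets_insert by (auto simp: p_def)
  moreover have "\<forall>x\<in>{i, j}. p x \<le> q x" "q j = p j"
    using \<open>i \<noteq> j\<close> by (auto simp: p_def q_def)
  ultimately have "\<exists>S. S \<subseteq> {i, j} \<and> j \<in> S \<and> v {} - sum q {} \<le> v S - sum q S"
    by (intro gross_substitutesD[OF gs]) auto
  then show False
    using superadditive \<open>v {} = 0\<close> \<open>i \<noteq> j\<close> unfolding ex_subsets_insert by (auto simp: p_def q_def)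
qed

lemma gross_substitutes_triple_submodular:
  assumes val: "valuation {i, j, k} v" and gs: "gross_substitutes {i, j, k} v"
    and distinct: "i \<noteq> j" "i \<noteq> k" "j \<noteq> k"
  shows "v {i, j, k} + v {i} \<le> v {i, j} + v {i, k}"
proof (rule ccontr)
  assume supermodular: "\<not> ?thesis"
  (* {i, j, k} is optimal at p; after raising the price of j the bundle {i} beats every bundle
     containing k. *)
  define p where "p x = (if x = i then -1 else if x = j then v {i, j} - v {i} else v {i, j, k} - v {i, j})"
    for x
  define q where "q = p(j := p j + 1)"
  have "v {} = 0" "0 \<le> v {i}" "v {j} \<le> v {i, j}" "v {k} \<le> v {i, k}" "v {j, k} \<le> v {i, j, k}"
    using val unfolding valuation_def by auto
  then have "{i, j, k} \<in> demand {i, j, k} v p"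
    using supermodular distinct unfolding demand_def all_subsets_insert by (auto simp: p_def)
  moreover have "\<forall>x\<in>{i, j, k}. p x \<le> q x" "q k = p k"
    using distinct by (auto simp: q_def)
  ultimately have "\<exists>S. S \<subseteq> {i, j, k} \<and> k \<in> S \<and> v {i} - sum q {i} \<le> v S - sum q S"
    by (intro gross_substitutesD[OF gs]) auto
  then show False
    using supermodular distinct \<open>v {} = 0\<close> \<open>0 \<le> v {i}\<close> \<open>v {k} \<le> v {i, k}\<close>
      \<open>v {j, k} \<le> v {i, j, k}\<close>
    unfolding ex_subsets_insert by (auto simp: p_def q_def)
qed

lemma gross_substitutes_triple_exchange:
  assumes val: "valuation {i, j, k} v" and gs: "gross_substitutes {i, j, k} v"
    and distinct: "i \<noteq> j" "i \<noteq> k" "j \<noteq> k"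
  shows "\<not> (v {i, k} + v {j} < v {i, j} + v {k} \<and> v {j, k} + v {i} < v {i, j} + v {k})"
proof
  assume "v {i, k} + v {j} < v {i, j} + v {k} \<and> v {j, k} + v {i} < v {i, j} + v {k}"
  then have ik: "v {i, k} + v {j} < v {i, j} + v {k}" and jk: "v {j, k} + v {i} < v {i, j} + v {k}"
    by auto
  have "valuation {i, j} v"
    by (rule valuation_subset[OF val]) blast
  moreover have "gross_substitutes {i, j} v"
    by (rule gross_substitutes_subset[OF _ val gs]) auto
  ultimately have subadditive: "v {i, j} \<le> v {i} + v {j}"
    using \<open>i \<noteq> j\<close> by (rule gross_substitutes_pair_subadditive)
  have submodular: "v {i, j, k} + v {i} \<le> v {i, j} + v {i, k}"
    using gross_substitutes_triple_submodular[OF val gs distinct] .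
  have "v {i} + v {j} - v {i, j}
      < min (v {i, j} + v {k} - v {i, j, k}) (v {i, j} + 2 * v {k} - v {i, k} - v {j, k})"
    unfolding min_less_iff_conj using subadditive submodular ik jk by (intro conjI; linarith)
  then obtain U where U: "v {i} + v {j} - v {i, j} < U"
    "U < min (v {i, j} + v {k} - v {i, j, k}) (v {i, j} + 2 * v {k} - v {i, k} - v {j, k})"
    using dense by blast
  have "max (v {i, k} - v {k}) (v {i} - U) < min (v {i, j} - v {j}) (v {i, j} + v {k} - v {j, k} - U)"
    unfolding min_less_iff_conj max_less_iff_conj using U ik jk by (intro conjI; linarith)
  then obtain t where t: "max (v {i, k} - v {k}) (v {i} - U) < t"
    "t < min (v {i, j} - v {j}) (v {i, j} + v {k} - v {j, k} - U)"
    using dense by blast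
  (* At p the bundles {i, j} and {k} are both optimal with utility U; after raising the price
     of i the bundle {k} beats every bundle containing j. *)
  define p where "p x = (if x = i then t else if x = j then v {i, j} - U - t else v {k} - U)" for x
  define q where "q = p(i := t + 1)"
  have "v {} = 0" using val unfolding valuation_def by auto
  then have "{i, j} \<in> demand {i, j, k} v p"
    using U t subadditive distinct unfolding demand_def all_subsets_insert by (auto simp: p_def)
  moreover have "\<forall>x\<in>{i, j, k}. p x \<le> q x" "q j = p j"
    using distinct by (auto simp: p_def q_def)
  ultimately have "\<exists>S. S \<subseteq> {i, j, k} \<and> j \<in> S \<and> v {k} - sum q {k} \<le> v S - sum q S"
    by (intro gross_substitutesD[OF gs]) auto
  then show False
    using U t distinct unfolding ex_subsets_insert by (auto simp: p_def q_def)
qed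

lemma gross_substitutes_exchange_tie:
  assumes "finite X" and val: "valuation X v" and gs: "gross_substitutes X v"
    and "i \<in> X" "j \<in> X" "k \<in> X" and distinct: "i \<noteq> j" "i \<noteq> k" "j \<noteq> k"
  shows "v {i, j} + v {k} = v {i, k} + v {j} \<or> v {i, j} + v {k} = v {j, k} + v {i} \<or>
    v {i, k} + v {j} = v {j, k} + v {i}"
proof -
  have "{i, j, k} \<subseteq> X" using \<open>i \<in> X\<close> \<open>j \<in> X\<close> \<open>k \<in> X\<close> by blast
  then have val3: "valuation {i, j, k} v" and gs3: "gross_substitutes {i, j, k} v"
    using valuation_subset[OF val] gross_substitutes_subset[OF \<open>finite X\<close> val gs] by blast+
  have "{i, k, j} = {i, j, k}" "{j, k, i} = {i, j, k}" by auto
  then have "valuation {i, k, j} v" "gross_substitutes {i, k, j} v"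
    and "valuation {j, k, i} v" "gross_substitutes {j, k, i} v"
    using val3 gs3 by simp_all
  have "{k, j} = {j, k}" "{j, i} = {i, j}" "{k, i} = {i, k}" by auto
  then have "\<not> (v {i, k} + v {j} < v {i, j} + v {k} \<and> v {j, k} + v {i} < v {i, j} + v {k})"
    and "\<not> (v {i, j} + v {k} < v {i, k} + v {j} \<and> v {j, k} + v {i} < v {i, k} + v {j})"
    and "\<not> (v {i, j} + v {k} < v {j, k} + v {i} \<and> v {i, k} + v {j} < v {j, k} + v {i})"
    using gross_substitutes_triple_exchange[OF val3 gs3 distinct]
      gross_substitutes_triple_exchange[OF \<open>valuation {i, k, j} v\<close> \<open>gross_substitutes {i, k, j} v\<close>]
      gross_substitutes_triple_exchange[OF \<open>valuation {j, k, i} v\<close> \<open>gross_substitutes {j, k, i} v\<close>]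
      distinct
    by simp_all
  then show ?thesis by argo
qed

section \<open>Rational prices suffice\<close>

lemma abs_sum_diff_le_card_mult:
  fixes p r :: "'a \<Rightarrow> real"
  assumes "finite X" "S \<subseteq> X" "0 \<le> d" "\<forall>x\<in>X. \<bar>p x - r x\<bar> \<le> d"
  shows "\<bar>sum p S - sum r S\<bar> \<le> real (card X) * d"
proof -
  have "\<bar>sum p S - sum r S\<bar> \<le> (\<Sum>x\<in>S. \<bar>p x - r x\<bar>)"
    by (metis sum_abs sum_subtractf)
  also have "\<dots> \<le> real (card S) * d"
    using sum_bounded_above[of S "\<lambda>x. \<bar>p x - r x\<bar>" d] assms(2,4) by auto
  also have "\<dots> \<le> real (card X) * d"
    using card_mono[OF assms(1,2)] \<open>0 \<le> d\<close> by (simp add: mult_right_mono)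
  finally show ?thesis .
qed

lemma demand_perturb_strict:
  fixes p :: "'a \<Rightarrow> real" and A :: "'a set" and e :: real
  defines "p' \<equiv> \<lambda>x. p x + (if x \<in> A then - e else e)"
  assumes "finite X" "A \<in> demand X v p" "T \<subseteq> X" "T \<noteq> A" "0 < e"
  shows "v T - sum p' T + e \<le> v A - sum p' A"
proof -
  have "A \<subseteq> X" and le: "v T - sum p T \<le> v A - sum p A"
    using assms(3,4) unfolding demand_def by auto
  have fin: "finite T" "finite A"
    using assms(2,4) \<open>A \<subseteq> X\<close> finite_subset by blast+
  have shift: "sum p' S = sum p S + e * (real (card (S - A)) - real (card (S \<inter> A)))" if "finite S" for S
  proof -
    have "sum (\<lambda>x. if x \<in> A then - e else e) S = (\<Sum>x\<in>S \<inter> A. - e) + (\<Sum>x\<in>S - A. e)"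
      using that by (simp add: sum.If_cases Diff_eq)
    then show ?thesis
      by (simp add: p'_def sum.distrib algebra_simps)
  qed
  have "real (card (T \<inter> A)) + 1 \<le> real (card A) + real (card (T - A))"
  proof (cases "T - A = {}")
    case True
    then have "T \<subset> A" using \<open>T \<noteq> A\<close> by blast
    then have "card T < card A" using fin psubset_card_mono by blast
    then show ?thesis using True by (simp add: Int_absorb2 Diff_eq_empty_iff)
  next
    case False
    then have "1 \<le> card (T - A)" using fin by (simp add: Suc_le_eq card_gt_0_iff)
    moreover have "card (T \<inter> A) \<le> card A" using fin by (simp add: card_mono)
    ultimately show ?thesis by linarith
  qed
  then have "e * (real (card (T \<inter> A)) + 1) \<le> e * (real (card A) + real (card (T - A)))"
    using \<open>0 < e\<close> by (intro mult_left_mono) auto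
  then show ?thesis
    using le shift[OF fin(1)] shift[OF fin(2)] by (simp add: algebra_simps)
qed

lemma demand_stable:
  fixes p r :: "'a \<Rightarrow> real"
  assumes "finite X" "A \<subseteq> X"
    and margin: "\<And>T. T \<subseteq> X \<Longrightarrow> T \<noteq> A \<Longrightarrow> v T - sum p T + e \<le> v A - sum p A"
    and close: "\<forall>x\<in>X. \<bar>r x - p x\<bar> \<le> d" and "0 \<le> d" "2 * real (card X) * d \<le> e"
  shows "A \<in> demand X v r"
proof -
  have "v T - sum r T \<le> v A - sum r A" if "T \<subseteq> X" for T
  proof (cases "T = A")
    case False
    have "\<bar>sum r S - sum p S\<bar> \<le> real (card X) * d" if "S \<subseteq> X" for S
      using abs_sum_diff_le_card_mult[OF \<open>finite X\<close> that \<open>0 \<le> d\<close> close] .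
    from this[OF \<open>T \<subseteq> X\<close>] this[OF \<open>A \<subseteq> X\<close>] show ?thesis
      using margin[OF \<open>T \<subseteq> X\<close> False] \<open>2 * real (card X) * d \<le> e\<close>
      unfolding abs_le_iff by linarith
  qed simp
  then show ?thesis using \<open>A \<subseteq> X\<close> unfolding demand_def by blast
qed

lemma demand_near_perturbed_prices:
  fixes p r :: "'a \<Rightarrow> real"
  assumes "finite X" "A \<in> demand X v p" "0 < e"
    and "\<forall>x\<in>X. \<bar>r x - (p x + (if x \<in> A then - e else e))\<bar> \<le> d" "0 \<le> d" "2 * real (card X) * d \<le> e"
  shows "A \<in> demand X v r"
proof (rule demand_stable[OF \<open>finite X\<close> _ _ assms(4-6)])
  show "A \<subseteq> X" using assms(2) unfolding demand_def by blast
qed (use demand_perturb_strict[OF \<open>finite X\<close> assms(2) _ _ \<open>0 < e\<close>] in blast)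

lemma no_demand_containing_open:
  fixes q :: "'a \<Rightarrow> real"
  assumes "finite X" "i \<in> X" and none: "\<forall>S\<in>demand X v q. i \<notin> S"
  obtains \<delta> where "0 < \<delta>" "\<And>r. \<forall>x\<in>X. \<bar>r x - q x\<bar> \<le> \<delta> \<Longrightarrow> \<forall>S\<in>demand X v r. i \<notin> S"
proof -
  define F where "F = {S. S \<subseteq> X \<and> i \<in> S}"
  have "\<forall>S\<in>F. \<exists>T. T \<subseteq> X \<and> v S - sum q S < v T - sum q T"
    using none unfolding F_def demand_def by (simp add: not_le[symmetric]) blast
  then obtain T where T: "\<And>S. S \<in> F \<Longrightarrow> T S \<subseteq> X \<and> v S - sum q S < v (T S) - sum q (T S)"
    by metis
  define \<gamma> where "\<gamma> = Min ((\<lambda>S. (v (T S) - sum q (T S)) - (v S - sum q S)) ` F)"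
  have "finite F" using \<open>finite X\<close> unfolding F_def by simp
  moreover have "F \<noteq> {}" using \<open>i \<in> X\<close> unfolding F_def by blast
  ultimately have "0 < \<gamma>"
    using T unfolding \<gamma>_def by (auto simp: Min_gr_iff)
  have gap: "v S - sum q S + \<gamma> \<le> v (T S) - sum q (T S)" if "S \<in> F" for S
  proof -
    have "\<gamma> \<le> (v (T S) - sum q (T S)) - (v S - sum q S)"
      unfolding \<gamma>_def using \<open>finite F\<close> that by (intro Min_le) auto
    then show ?thesis by linarith
  qed
  have "0 < card X" using \<open>finite X\<close> \<open>i \<in> X\<close> card_gt_0_iff by blast
  define \<delta> where "\<delta> = \<gamma> / (4 * real (card X))"
  have "0 < \<delta>" and card_\<delta>: "real (card X) * \<delta> = \<gamma> / 4"
    using \<open>0 < \<gamma>\<close> \<open>0 < card X\<close> by (simp_all add: \<delta>_def)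
  show ?thesis
  proof (rule that[OF \<open>0 < \<delta>\<close>], intro ballI notI)
    fix r S assume close: "\<forall>x\<in>X. \<bar>r x - q x\<bar> \<le> \<delta>" and "S \<in> demand X v r" "i \<in> S"
    then have "S \<in> F" and max: "v (T S) - sum r (T S) \<le> v S - sum r S"
      using T unfolding F_def demand_def by auto
    have "\<bar>sum r U - sum q U\<bar> \<le> \<gamma> / 4" if "U \<subseteq> X" for U
      using abs_sum_diff_le_card_mult[OF \<open>finite X\<close> that _ close] \<open>0 < \<delta>\<close> card_\<delta> by simp
    from this[of S] this[of "T S"] show False
      using gap[OF \<open>S \<in> F\<close>] max T[OF \<open>S \<in> F\<close>] \<open>0 < \<gamma>\<close> \<open>S \<in> F\<close>
      unfolding F_def abs_le_iff by auto
  qed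
qed

definition grid_floor :: "nat \<Rightarrow> real \<Rightarrow> real" where
  "grid_floor N y = of_int \<lfloor>y * real N\<rfloor> / real N"

lemma grid_floor_Rats: "grid_floor N y \<in> \<rat>"
  by (simp add: grid_floor_def)

lemma grid_floor_mono: "y \<le> z \<Longrightarrow> grid_floor N y \<le> grid_floor N z"
  unfolding grid_floor_def by (intro divide_right_mono) (simp_all add: floor_mono mult_right_mono)

lemma grid_floor_approx:
  assumes "0 < N"
  shows "\<bar>grid_floor N y - y\<bar> \<le> 1 / real N"
proof -
  have "y * real N - 1 \<le> of_int \<lfloor>y * real N\<rfloor>" "of_int \<lfloor>y * real N\<rfloor> \<le> y * real N"
    by linarith+
  then have "(y * real N - 1) / real N \<le> grid_floor N y" "grid_floor N y \<le> y * real N / real N"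
    unfolding grid_floor_def by (metis divide_right_mono of_nat_0_le_iff)+
  moreover have "(y * real N - 1) / real N = y - 1 / real N" "y * real N / real N = y"
    using assms by (simp_all add: diff_divide_distrib)
  ultimately have "y - 1 / real N \<le> grid_floor N y" "grid_floor N y \<le> y"
    by simp_all
  then show ?thesis by linarith
qed

definition rational_gross_substitutes :: "'a set \<Rightarrow> ('a set \<Rightarrow> real) \<Rightarrow> bool" where
  "rational_gross_substitutes X v \<longleftrightarrow>
     (\<forall>i\<in>X. \<forall>p\<in>X \<rightarrow>\<^sub>E \<rat>. \<forall>q\<in>X \<rightarrow>\<^sub>E \<rat>. (\<forall>x\<in>X. p x \<le> q x) \<and> q i = p i \<and> (\<exists>A\<in>demand X v p. i \<in> A)
        \<longrightarrow> (\<exists>A'\<in>demand X v q. i \<in> A'))"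

lemma gross_substitutes_if_rational:
  assumes "finite X" and rational: "rational_gross_substitutes X v"
  shows "gross_substitutes X v"
  unfolding gross_substitutes_def
proof (intro ballI allI impI; elim conjE bexE)
  fix i p q A
  assume "i \<in> X" and le: "\<forall>x\<in>X. p x \<le> q x" and "q i = p i" and A: "A \<in> demand X v p" "i \<in> A"
  show "\<exists>A'\<in>demand X v q. i \<in> A'"
  proof (rule ccontr)
    assume "\<not> ?thesis"
    then have "\<forall>S\<in>demand X v q. i \<notin> S" by blast
    then obtain \<delta> where "0 < \<delta>" and far: "\<And>r. \<forall>x\<in>X. \<bar>r x - q x\<bar> \<le> \<delta> \<Longrightarrow> \<forall>S\<in>demand X v r. i \<notin> S"
      using no_demand_containing_open[OF \<open>finite X\<close> \<open>i \<in> X\<close>] by metis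
    (* Shifting prices by -e on A and by e off A makes A the unique optimal bundle at p with
       margin e. Rounding down to a fine grid is monotone, so p \<le> q and q i = p i survive, and
       the rounded q stays within \<delta> of q. *)
    define e where "e = \<delta> / 2"
    define shift where "shift x = (if x \<in> A then - e else e)" for x
    have "0 < e" using \<open>0 < \<delta>\<close> by (simp add: e_def)
    moreover have "1 \<le> real (card X)"
      using \<open>finite X\<close> \<open>i \<in> X\<close> by (auto simp: Suc_le_eq card_gt_0_iff)
    ultimately have "0 < e / (2 * real (card X))" by simp
    then obtain N :: nat where "0 < N" "inverse (real N) < e / (2 * real (card X))"
      using ex_inverse_of_nat_less by blast
    with \<open>1 \<le> real (card X)\<close> have N_le: "2 * real (card X) * (1 / real N) \<le> e" "1 / real N \<le> e"
      by (simp_all add: field_simps)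
    define P where "P = restrict (\<lambda>x. grid_floor N (p x + shift x)) X"
    define Q where "Q = restrict (\<lambda>x. grid_floor N (q x + shift x)) X"
    have "P \<in> X \<rightarrow>\<^sub>E \<rat>" "Q \<in> X \<rightarrow>\<^sub>E \<rat>"
      by (auto simp: P_def Q_def grid_floor_Rats)
    moreover have "\<forall>x\<in>X. P x \<le> Q x" "Q i = P i"
      using le \<open>q i = p i\<close> \<open>i \<in> X\<close> by (auto simp: P_def Q_def grid_floor_mono)
    moreover have "\<forall>x\<in>X. \<bar>P x - (p x + shift x)\<bar> \<le> 1 / real N"
      using grid_floor_approx[OF \<open>0 < N\<close>] by (simp add: P_def)
    then have "A \<in> demand X v P"
      using demand_near_perturbed_prices[OF \<open>finite X\<close> A(1) \<open>0 < e\<close>] N_le(1)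
      unfolding shift_def by simp
    ultimately obtain S where "S \<in> demand X v Q" "i \<in> S"
      using rational \<open>i \<in> X\<close> A(2) unfolding rational_gross_substitutes_def by blast
    moreover have "\<bar>Q x - q x\<bar> \<le> \<delta>" if "x \<in> X" for x
    proof -
      have "\<bar>Q x - (q x + shift x)\<bar> \<le> 1 / real N"
        using grid_floor_approx[OF \<open>0 < N\<close>] that by (simp add: Q_def)
      then show ?thesis
        using N_le(2) unfolding shift_def e_def by (auto split: if_splits)
    qed
    ultimately show False using far by blast
  qed
qed

lemma gross_substitutes_iff_rational:
  assumes "finite X"
  shows "gross_substitutes X v \<longleftrightarrow> rational_gross_substitutes X v"
proof
  assume "gross_substitutes X v"
  then show "rational_gross_substitutes X v"
    unfolding gross_substitutes_def rational_gross_substitutes_def by blast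
qed (rule gross_substitutes_if_rational[OF assms])

section \<open>Measure zero and empty interior\<close>

lemma measurable_val_of [measurable]: "(\<lambda>f. val_of f T) \<in> borel_measurable (PiM I (\<lambda>_. borel))"
proof (cases "T \<in> I \<or> T = {}")
  case True
  then show ?thesis by (auto simp: val_of_def)
next
  case False
  then have "val_of f T = undefined" if "f \<in> space (PiM I (\<lambda>_. borel))" for f
    using that by (auto simp: val_of_def space_PiM PiE_def extensional_def)
  then show ?thesis by (subst measurable_cong) auto
qed

(* Without this predicate form of borel_measurable_le the measurable method fails on
   comparisons such as val_of f A \<le> val_of f B. *)
lemma pred_real_le [measurable (raw)]:
  fixes f g :: "'a \<Rightarrow> real"
  shows "f \<in> borel_measurable M \<Longrightarrow> g \<in> borel_measurable M \<Longrightarrow> Measurable.pred M (\<lambda>x. f x \<le> g x)"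
  by (simp add: pred_def)

lemma valuation_val_of_iff:
  "valuation X (val_of f) \<longleftrightarrow> (\<forall>A\<in>Pow X. \<forall>B\<in>Pow X. A \<subseteq> B \<longrightarrow> val_of f A \<le> val_of f B)"
proof -
  have "val_of f {} = 0" by (simp add: val_of_def)
  then show ?thesis
    unfolding valuation_def by (metis Pow_iff empty_subsetI subset_trans)
qed

lemma sets_GS_set:
  assumes "finite X"
  shows "GS_set X \<in> sets (PiM (nonempty_subsets X) (\<lambda>_. lborel))"
proof -
  have [simp]: "finite (Pow X)" "finite X" using assms by simp_all
  have [simp]: "countable (X \<rightarrow>\<^sub>E \<rat>)" using assms countable_rat by (intro countable_PiE) auto
  have "GS_set X = {f \<in> space (PiM (nonempty_subsets X) (\<lambda>_. lborel)).
    (\<forall>A\<in>Pow X. \<forall>B\<in>Pow X. A \<subseteq> B \<longrightarrow> val_of f A \<le> val_of f B) \<and>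
    (\<forall>i\<in>X. \<forall>p\<in>X \<rightarrow>\<^sub>E \<rat>. \<forall>q\<in>X \<rightarrow>\<^sub>E \<rat>. ((\<forall>x\<in>X. p x \<le> q x) \<and> q i = p i \<and>
       (\<exists>A\<in>Pow X. i \<in> A \<and> (\<forall>T\<in>Pow X. val_of f T - sum p T \<le> val_of f A - sum p A)))
     \<longrightarrow> (\<exists>A\<in>Pow X. i \<in> A \<and> (\<forall>T\<in>Pow X. val_of f T - sum q T \<le> val_of f A - sum q A)))}"
    unfolding GS_set_def valuation_val_of_iff gross_substitutes_iff_rational[OF assms]
      rational_gross_substitutes_def demand_def
    by (simp add: space_PiM Bex_def Ball_def conj_ac)
  also have "\<dots> \<in> sets (PiM (nonempty_subsets X) (\<lambda>_. lborel))"
    by measurable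
  finally show ?thesis .
qed

lemma null_sets_PiM_graph:
  fixes h :: "('i \<Rightarrow> real) \<Rightarrow> real"
  assumes "finite I" "s \<in> I"
    and [measurable]: "h \<in> borel_measurable (PiM I (\<lambda>_. lborel))"
    and indep: "\<And>f y. h (f(s := y)) = h f"
  shows "{f \<in> space (PiM I (\<lambda>_. lborel)). f s = h f} \<in> null_sets (PiM I (\<lambda>_. lborel))"
proof -
  interpret product_sigma_finite "\<lambda>_. lborel :: real measure" by standard
  define J where "J = I - {s}"
  have I: "I = insert s J" "s \<notin> J" "finite J" using assms(1,2) by (auto simp: J_def)
  let ?H = "{f \<in> space (PiM I (\<lambda>_. lborel)). f s = h f}"
  have "(\<lambda>f. f s) \<in> borel_measurable (PiM I (\<lambda>_. lborel))"
    using measurable_component_singleton[OF \<open>s \<in> I\<close>, of "\<lambda>_. lborel"] by simp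
  then have H: "?H \<in> sets (PiM I (\<lambda>_. lborel))" by measurable
  have "emeasure (PiM I (\<lambda>_. lborel)) ?H = (\<integral>\<^sup>+ f. indicator ?H f \<partial>PiM I (\<lambda>_. lborel))"
    using H by simp
  also have "\<dots> = (\<integral>\<^sup>+ x. (\<integral>\<^sup>+ y. indicator ?H (x(s := y)) \<partial>lborel) \<partial>PiM J (\<lambda>_. lborel))"
    unfolding I(1) by (rule product_nn_integral_insert[OF I(3,2)]) (use H I(1) in simp)
  also have "\<dots> = (\<integral>\<^sup>+ x. (\<integral>\<^sup>+ y. indicator {h x} y \<partial>lborel) \<partial>PiM J (\<lambda>_. lborel))"
  proof (intro nn_integral_cong)
    fix x :: "'i \<Rightarrow> real" and y :: real
    assume "x \<in> space (PiM J (\<lambda>_. lborel))"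
    then have "x(s := y) \<in> space (PiM I (\<lambda>_. lborel))"
      unfolding I(1) by (auto simp: space_PiM PiE_def extensional_def)
    then show "indicator ?H (x(s := y)) = (indicator {h x} y :: ennreal)"
      using indep[of x y] by (auto simp: indicator_def)
  qed
  also have "\<dots> = 0" by simp
  finally show ?thesis using H by auto
qed

lemma null_sets_exchange_hyperplane:
  assumes "finite X" "a \<in> X" "b \<in> X" "c \<in> X" "a \<noteq> b" "a \<noteq> c" "b \<noteq> c"
  shows "{f \<in> space (PiM (nonempty_subsets X) (\<lambda>_. lborel)). f {a, b} + f {c} = f {a, c} + (f {b} :: real)}
    \<in> null_sets (PiM (nonempty_subsets X) (\<lambda>_. lborel))"
proof -
  let ?I = "nonempty_subsets X"
  have I [simp]: "{a, b} \<in> ?I" "{a, c} \<in> ?I" "{b} \<in> ?I" "{c} \<in> ?I" "finite ?I"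
    using assms by (auto simp: nonempty_subsets_def)
  have other: "{a, c} \<noteq> {a, b}" "{b} \<noteq> {a, b}" "{c} \<noteq> {a, b}"
    using assms by (auto simp: doubleton_eq_iff)
  have coordinate: "(\<lambda>f. f S) \<in> borel_measurable (PiM ?I (\<lambda>_. lborel))" if "S \<in> ?I" for S
    using measurable_component_singleton[OF that, of "\<lambda>_. lborel"] by simp
  have "(\<lambda>f. f {a, c} + f {b} - f {c}) \<in> borel_measurable (PiM ?I (\<lambda>_. lborel))"
    by (intro borel_measurable_add borel_measurable_diff coordinate I)
  moreover have "(f({a, b} := y)) {a, c} + (f({a, b} := y)) {b} - (f({a, b} := y)) {c}
      = f {a, c} + f {b} - f {c}" for f :: "'a set \<Rightarrow> real" and y
    by (simp only: fun_upd_other[OF other(1)] fun_upd_other[OF other(2)] fun_upd_other[OF other(3)])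
  ultimately have "{f \<in> space (PiM ?I (\<lambda>_. lborel)). f {a, b} = f {a, c} + f {b} - (f {c} :: real)}
    \<in> null_sets (PiM ?I (\<lambda>_. lborel))"
    by (rule null_sets_PiM_graph[OF I(5,1)])
  moreover have "f {a, b} + f {c} = f {a, c} + f {b} \<longleftrightarrow> f {a, b} = f {a, c} + f {b} - f {c}"
    for f :: "'a set \<Rightarrow> real"
    by linarith
  ultimately show ?thesis by simp
qed

lemma null_sets_PiM_lborel_no_box:
  fixes f :: "'i \<Rightarrow> real"
  assumes "finite I" "N \<in> null_sets (PiM I (\<lambda>_. lborel))" "0 < e"
  shows "\<exists>g\<in>I \<rightarrow>\<^sub>E UNIV. (\<forall>i\<in>I. \<bar>g i - f i\<bar> < e) \<and> g \<notin> N"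
proof (rule ccontr)
  assume inside: "\<not> ?thesis"
  define B where "B = (\<Pi>\<^sub>E i\<in>I. {f i - e <..< f i + e})"
  have "B \<subseteq> N"
  proof
    fix g assume "g \<in> B"
    then have "g \<in> I \<rightarrow>\<^sub>E UNIV" "\<forall>i\<in>I. \<bar>g i - f i\<bar> < e"
      unfolding B_def PiE_iff abs_diff_less_iff by auto
    then show "g \<in> N" using inside by blast
  qed
  interpret product_sigma_finite "\<lambda>_. lborel :: real measure" by standard
  have "emeasure (PiM I (\<lambda>_. lborel)) B = (\<Prod>i\<in>I. emeasure lborel {f i - e <..< f i + e})"
    unfolding B_def by (rule emeasure_PiM[OF \<open>finite I\<close>]) simp
  also have "\<dots> = ennreal (2 * e) ^ card I"
    using \<open>0 < e\<close> by simp
  finally have "emeasure (PiM I (\<lambda>_. lborel)) B \<noteq> 0"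
    using \<open>0 < e\<close> by simp
  moreover have "emeasure (PiM I (\<lambda>_. lborel)) B \<le> emeasure (PiM I (\<lambda>_. lborel)) N"
    using \<open>B \<subseteq> N\<close> assms(2) by (intro emeasure_mono) auto
  ultimately show False using null_setsD1[OF assms(2)] by simp
qed

theorem theorem7:
  fixes X :: "'a set"
  assumes "finite X" and "card X \<ge> 3"
  shows "GS_set X \<in> null_sets (PiM (nonempty_subsets X) (\<lambda>_. lborel)) \<and>
         \<not> (\<exists>f\<in>GS_set X. \<exists>e>0. \<forall>g\<in>PiE (nonempty_subsets X) (\<lambda>_. UNIV).
            (\<forall>S\<in>nonempty_subsets X. \<bar>g S - f S\<bar> < e) \<longrightarrow> g \<in> GS_set X)"
proof -
  let ?M = "PiM (nonempty_subsets X) (\<lambda>_. lborel :: real measure)"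
  let ?H = "\<lambda>a b c. {f \<in> space ?M. f {a, b} + f {c} = f {a, c} + f {b}}"
  obtain T where "T \<subseteq> X" "card T = 3"
    using obtain_subset_with_card_n[OF assms(2)] by blast
  then obtain i j k where ijk: "i \<in> X" "j \<in> X" "k \<in> X" "i \<noteq> j" "i \<noteq> k" "j \<noteq> k"
    by (auto simp: card_3_iff)
  have "GS_set X \<subseteq> ?H i j k \<union> ?H j i k \<union> ?H k i j"
  proof
    fix f assume "f \<in> GS_set X"
    then have "f \<in> space ?M" "valuation X (val_of f)" "gross_substitutes X (val_of f)"
      unfolding GS_set_def by (auto simp: space_PiM)
    moreover note gross_substitutes_exchange_tie[OF \<open>finite X\<close> this(2,3) ijk]
    moreover have "{j, i} = {i, j}" "{k, i} = {i, k}" "{k, j} = {j, k}" by auto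
    ultimately show "f \<in> ?H i j k \<union> ?H j i k \<union> ?H k i j"
      by (auto simp: val_of_def)
  qed
  moreover have "?H i j k \<union> ?H j i k \<union> ?H k i j \<in> null_sets ?M"
    using ijk by (intro null_sets.Un null_sets_exchange_hyperplane[OF \<open>finite X\<close>]) auto
  ultimately have "GS_set X \<in> null_sets ?M"
    using null_sets_subset sets_GS_set[OF \<open>finite X\<close>] by blast
  moreover have "finite (nonempty_subsets X)"
    using \<open>finite X\<close> by (simp add: nonempty_subsets_def)
  ultimately show ?thesis
    using null_sets_PiM_lborel_no_box by blast
qed

end
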